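(* Let $K$ be a self-similar compact set of ratio $\rho$ and module $\mu$, and put $T_u=K^{(u)}\setminus K^{(u+1)}$ for $u\ge0$. Then for every integer $n\ge1$ and every ordinal $0\le\alpha\le\omega^\omega$, $K^{(n)}[\alpha]=K[\omega^n(1+\alpha)]$. Moreover, for every ordinal $0\le\alpha<\omega^\omega$, \[T_0[\alpha]=\begin{cases}K[\alpha]&\text{if }\alpha<\omega,\\ K[\alpha+1]&\text{if }\alpha\ge\omega,\end{cases}\qquad\text{and}\qquad T_u[\alpha]=K[\omega^u(\alpha+1)]\ \text{ for } u\ge1.\]
   Context: For $A\subset\mathbf{R}$, $A'$ denotes the derived set of $A$, $A^{(0)}=A$, $A^{(n+1)}=(A^{(n)})'$. The reverse usual order is $x\preccurlyeq y$ iff $x\ge y$. A self-similar compact set of ratio $\rho>1$ and module $\mu\in\mathbf{N}$ is a compact set $K\subset[0,+\infty)$ with $\rho K^{(\mu)}=K$, well ordered by $\preccurlyeq$, of order type $\omega^\omega+1$. For a set $L\subset\mathbf{R}$ well ordered by $\preccurlyeq$ and an ordinal $\alpha$ less than its order type, $L[\alpha]$ denotes the element of $L$ in position $\alpha$ for $\preccurlyeq$ (positions start at $0$). Ordinal arithmetic is the standard one. *)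

theory Defs
  imports "HOL-Analysis.Analysis" "HOL-Library.Poly_Mapping"
begin

text \<open>An ordinal below omega^omega is written uniquely in Cantor normal form
  omega^k c_k + ... + omega c_1 + c_0; we store it as the finitely supported
  coefficient map i -> c_i.  The constructor OmegaOmega is omega^omega itself.
  The type thus contains exactly the ordinals alpha with alpha <= omega^omega.\<close>

datatype ordww = Below "nat \<Rightarrow>\<^sub>0 nat" | OmegaOmega

definition top_exp :: "(nat \<Rightarrow>\<^sub>0 nat) \<Rightarrow> nat" where
  "top_exp f = Max (Poly_Mapping.keys f)"

definition cnf_less :: "(nat \<Rightarrow>\<^sub>0 nat) \<Rightarrow> (nat \<Rightarrow>\<^sub>0 nat) \<Rightarrow> bool" where
  "cnf_less f g \<longleftrightarrow> f \<noteq> g \<and>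
     (let m = Max {i. Poly_Mapping.lookup f i \<noteq> Poly_Mapping.lookup g i} in Poly_Mapping.lookup f m < Poly_Mapping.lookup g m)"

definition cnf_add :: "(nat \<Rightarrow>\<^sub>0 nat) \<Rightarrow> (nat \<Rightarrow>\<^sub>0 nat) \<Rightarrow> (nat \<Rightarrow>\<^sub>0 nat)" where
  "cnf_add f g = (if g = 0 then f else
     (let e = top_exp g in Abs_poly_mapping (\<lambda>i.
        if e < i then Poly_Mapping.lookup f i else if i = e then Poly_Mapping.lookup f i + Poly_Mapping.lookup g i else Poly_Mapping.lookup g i)))"

definition cnf_mult :: "(nat \<Rightarrow>\<^sub>0 nat) \<Rightarrow> (nat \<Rightarrow>\<^sub>0 nat) \<Rightarrow> (nat \<Rightarrow>\<^sub>0 nat)" where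
  "cnf_mult f g = (if f = 0 \<or> g = 0 then 0 else
     (let e = top_exp f in Abs_poly_mapping (\<lambda>i.
        if e < i then Poly_Mapping.lookup g (i - e)
        else if Poly_Mapping.lookup g 0 = 0 then 0
        else if i = e then Poly_Mapping.lookup f e * Poly_Mapping.lookup g 0
        else Poly_Mapping.lookup f i)))"

text \<open>Results that would exceed omega^omega (only possible as OmegaOmega + beta with
  beta > 0, or OmegaOmega * beta with beta > 1) are not ordinals of this type;
  they are sent to OmegaOmega by convention and never occur in the statement.\<close>

instantiation ordww :: "{zero, one, plus, times, ord}"
begin

definition zero_ordww :: ordww where "zero_ordww = Below 0"

definition one_ordww :: ordww where "one_ordww = Below (Poly_Mapping.single 0 1)"

definition less_ordww :: "ordww \<Rightarrow> ordww \<Rightarrow> bool" where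
  "less_ordww a b = (case (a, b) of
      (Below f, Below g) \<Rightarrow> cnf_less f g
    | (Below f, OmegaOmega) \<Rightarrow> True
    | (OmegaOmega, _) \<Rightarrow> False)"

definition less_eq_ordww :: "ordww \<Rightarrow> ordww \<Rightarrow> bool" where
  "less_eq_ordww a b = (a = b \<or> a < b)"

definition plus_ordww :: "ordww \<Rightarrow> ordww \<Rightarrow> ordww" where
  "plus_ordww a b = (case (a, b) of
      (Below f, Below g) \<Rightarrow> Below (cnf_add f g)
    | (Below f, OmegaOmega) \<Rightarrow> OmegaOmega
    | (OmegaOmega, _) \<Rightarrow> OmegaOmega)"

definition times_ordww :: "ordww \<Rightarrow> ordww \<Rightarrow> ordww" where
  "times_ordww a b = (case (a, b) of
      (Below f, Below g) \<Rightarrow> Below (cnf_mult f g)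
    | (Below f, OmegaOmega) \<Rightarrow> (if f = 0 then Below 0 else OmegaOmega)
    | (OmegaOmega, Below g) \<Rightarrow> (if g = 0 then Below 0 else OmegaOmega)
    | (OmegaOmega, OmegaOmega) \<Rightarrow> OmegaOmega)"

instance ..
end

definition omega_pow :: "nat \<Rightarrow> ordww" where
  "omega_pow n = Below (Poly_Mapping.single n 1)"

abbreviation omega :: ordww where "omega \<equiv> omega_pow 1"

definition derived :: "real set \<Rightarrow> real set" where
  "derived A = {x. x islimpt A}"

definition rev_otype :: "real set \<Rightarrow> ordww \<Rightarrow> bool" where
  "rev_otype S \<alpha> \<longleftrightarrow> (\<exists>f. bij_betw f {\<beta>. \<beta> < \<alpha>} S \<and>
      (\<forall>\<beta> \<gamma>. \<beta> < \<alpha> \<longrightarrow> \<gamma> < \<alpha> \<longrightarrow> \<beta> < \<gamma> \<longrightarrow> f \<gamma> < f \<beta>))"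

definition rev_otype_ww1 :: "real set \<Rightarrow> bool" where
  "rev_otype_ww1 S \<longleftrightarrow> (\<exists>f. bij_betw f {\<beta>. \<beta> \<le> OmegaOmega} S \<and>
      (\<forall>\<beta> \<gamma>. \<beta> < \<gamma> \<longrightarrow> f \<gamma> < f \<beta>))"

definition is_at :: "real set \<Rightarrow> ordww \<Rightarrow> real \<Rightarrow> bool" where
  "is_at L \<alpha> x \<longleftrightarrow> x \<in> L \<and> rev_otype {y \<in> L. x < y} \<alpha>"

definition ord_at :: "real set \<Rightarrow> ordww \<Rightarrow> real" where
  "ord_at L \<alpha> = (THE x. is_at L \<alpha> x)"

definition self_similar :: "real set \<Rightarrow> real \<Rightarrow> nat \<Rightarrow> bool" where
  "self_similar K \<rho> \<mu> \<longleftrightarrow> \<rho> > 1 \<and> compact K \<and> K \<subseteq> {0..} \<and>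
     (\<lambda>x. \<rho> * x) ` ((derived ^^ \<mu>) K) = K \<and> rev_otype_ww1 K"

end

theory Submission
  imports Defs "HOL-Library.Multiset_Order"
begin

text \<open>Enumerate \<open>K\<close> decreasingly as \<open>f \<beta>\<close>, \<open>\<beta> \<le> \<omega>^\<omega>\<close>. As \<open>K\<close> is compact and \<open>f\<close> reverses
  a well-order, \<open>f \<beta>\<close> is a limit point of \<open>f ` A\<close> exactly when \<open>\<beta>\<close> is a limit point of \<open>A\<close>
  in the order topology (the infimum of the \<open>f \<gamma>\<close>, \<open>\<gamma> < \<beta>\<close>, lies in \<open>K\<close>). Iterating,
  the \<open>n\<close>-th derived set is the image of the nonzero multiples \<open>\<omega>^n (1 + \<alpha>)\<close> of \<open>\<omega>^n\<close>;
  removing the \<open>(u + 1)\<close>-th from the \<open>u\<close>-th leaves the positions \<open>\<omega>^u (\<alpha> + 1)\<close> for \<open>u \<ge> 1\<close>, and for \<open>u = 0\<close> the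
  positions not divisible by \<open>\<omega>\<close>, namely \<open>\<alpha>\<close> for finite \<open>\<alpha>\<close> and \<open>\<alpha> + 1\<close> otherwise.
  Each of these reindexings \<open>h\<close> is strictly increasing on an initial segment, so the element in
  position \<open>\<alpha>\<close> of its image is \<open>f (h \<alpha>)\<close>.\<close>

section \<open>The Cantor normal forms below omega^omega form a well-order\<close>

abbreviation coeff :: "(nat \<Rightarrow>\<^sub>0 nat) \<Rightarrow> nat \<Rightarrow> nat" where
  "coeff \<equiv> Poly_Mapping.lookup"

lemma finite_coeff_differ: "finite {i. coeff f i \<noteq> coeff g i}"
  by (rule finite_subset[of _ "{i. coeff f i \<noteq> 0} \<union> {i. coeff g i \<noteq> 0}"]) auto

lemma cnf_less_iff:
  "cnf_less f g \<longleftrightarrow> (\<exists>m. coeff f m < coeff g m \<and> (\<forall>i>m. coeff f i = coeff g i))"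
proof
  let ?S = "{i. coeff f i \<noteq> coeff g i}"
  assume "cnf_less f g"
  then have "coeff f (Max ?S) < coeff g (Max ?S)"
    unfolding cnf_less_def Let_def by auto
  moreover have "\<forall>i>Max ?S. coeff f i = coeff g i"
    using Max_ge[OF finite_coeff_differ] by (metis (mono_tags, lifting) mem_Collect_eq not_le)
  ultimately show "\<exists>m. coeff f m < coeff g m \<and> (\<forall>i>m. coeff f i = coeff g i)" by blast
next
  assume "\<exists>m. coeff f m < coeff g m \<and> (\<forall>i>m. coeff f i = coeff g i)"
  then obtain m where m: "coeff f m < coeff g m" "\<forall>i>m. coeff f i = coeff g i" by blast
  then have "Max {i. coeff f i \<noteq> coeff g i} = m"
    using finite_coeff_differ by (intro Max_eqI) (auto simp: not_less[symmetric])
  with m show "cnf_less f g" unfolding cnf_less_def Let_def by auto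
qed

lemma cnf_less_irrefl: "\<not> cnf_less f f"
  by (auto simp: cnf_less_iff)

lemma cnf_less_trans: "cnf_less f g \<Longrightarrow> cnf_less g h \<Longrightarrow> cnf_less f h"
  unfolding cnf_less_iff
proof (elim exE conjE)
  fix m1 m2
  assume f: "coeff f m1 < coeff g m1" "\<forall>i>m1. coeff f i = coeff g i"
     and h: "coeff g m2 < coeff h m2" "\<forall>i>m2. coeff g i = coeff h i"
  show "\<exists>m. coeff f m < coeff h m \<and> (\<forall>i>m. coeff f i = coeff h i)"
  proof (cases "m1 \<le> m2")
    case True
    then show ?thesis using f h by (intro exI[of _ m2]) (auto simp: le_less)
  next
    case False
    then show ?thesis using f h by (intro exI[of _ m1]) auto
  qed
qed

lemma cnf_less_asym: "cnf_less f g \<Longrightarrow> \<not> cnf_less g f"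
  using cnf_less_trans cnf_less_irrefl by blast

lemma cnf_less_total: "f \<noteq> g \<Longrightarrow> cnf_less f g \<or> cnf_less g f"
proof -
  assume "f \<noteq> g"
  let ?S = "{i. coeff f i \<noteq> coeff g i}"
  have "?S \<noteq> {}" using \<open>f \<noteq> g\<close> by (metis (mono_tags) Collect_empty_eq poly_mapping_eqI)
  then have "Max ?S \<in> ?S" using finite_coeff_differ by (rule Max_in[rotated])
  moreover have "{i. coeff g i \<noteq> coeff f i} = ?S" by auto
  ultimately show ?thesis unfolding cnf_less_def Let_def using \<open>f \<noteq> g\<close>
    by (metis (mono_tags, lifting) linorder_neqE_nat mem_Collect_eq)
qed

text \<open>\<open>cnf_less\<close> is contained in the Dershowitz--Manna order on the multisets of exponents,
  which is well-founded.\<close>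

definition exponent_multiset :: "(nat \<Rightarrow>\<^sub>0 nat) \<Rightarrow> nat multiset" where
  "exponent_multiset f = Abs_multiset (coeff f)"

lemma count_exponent_multiset: "count (exponent_multiset f) = coeff f"
proof -
  have "finite {i. 0 < coeff f i}" by simp
  then show ?thesis unfolding exponent_multiset_def by (rule count_Abs_multiset)
qed

lemma cnf_less_imp_exponent_multiset_less:
  assumes "cnf_less f g"
  shows "exponent_multiset f < exponent_multiset g"
proof -
  obtain m where m: "coeff f m < coeff g m" "\<forall>i>m. coeff f i = coeff g i"
    using assms unfolding cnf_less_iff by blast
  have "exponent_multiset f \<noteq> exponent_multiset g"
    using m(1) by (metis count_exponent_multiset less_irrefl)
  moreover have "\<exists>x>y. coeff f x < coeff g x" if "coeff g y < coeff f y" for y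
  proof -
    have "y < m" using that m by (metis less_asym nat_neq_iff)
    then show ?thesis using m(1) by blast
  qed
  ultimately show ?thesis unfolding less_multiset\<^sub>H\<^sub>O count_exponent_multiset by blast
qed

lemma wf_cnf_less: "wf {(f, g). cnf_less f g}"
proof -
  have "{(f, g). cnf_less f g} \<subseteq> inv_image {(M, N). M < N} exponent_multiset"
    using cnf_less_imp_exponent_multiset_less by auto
  then show ?thesis using wf_less_multiset wf_inv_image wf_subset by blast
qed

lemma less_ordww_simps [simp]:
  "Below f < Below g \<longleftrightarrow> cnf_less f g"
  "Below f < OmegaOmega"
  "\<not> OmegaOmega < x"
  by (auto simp: less_ordww_def split: ordww.splits)

instance ordww :: wellorder
proof
  fix x y z :: ordww
  show "(x < y) = (x \<le> y \<and> \<not> y \<le> x)"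
    unfolding less_eq_ordww_def
    by (cases x; cases y) (auto dest: cnf_less_trans simp: cnf_less_irrefl)
  show "x \<le> x" by (simp add: less_eq_ordww_def)
  show "x \<le> y \<Longrightarrow> y \<le> z \<Longrightarrow> x \<le> z"
    unfolding less_eq_ordww_def by (cases x; cases y; cases z) (auto dest: cnf_less_trans)
  show "x \<le> y \<Longrightarrow> y \<le> x \<Longrightarrow> x = y"
    unfolding less_eq_ordww_def by (cases x; cases y) (auto dest: cnf_less_asym)
  show "x \<le> y \<or> y \<le> x"
    unfolding less_eq_ordww_def by (cases x; cases y) (auto dest: cnf_less_total)
next
  fix P :: "ordww \<Rightarrow> bool" and a
  assume step: "\<And>x. (\<And>y. y < x \<Longrightarrow> P y) \<Longrightarrow> P x"
  have Below: "P (Below f)" for f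
    using wf_cnf_less
  proof (induction f rule: wf_induct_rule)
    case (less f)
    show ?case
    proof (rule step)
      fix y assume "y < Below f"
      then obtain g where "y = Below g" "cnf_less g f" by (cases y) auto
      then show "P y" using less by auto
    qed
  qed
  moreover have "P OmegaOmega"
    by (rule step) (metis Below ordww.exhaust less_ordww_simps(3))
  ultimately show "P a" by (cases a) auto
qed

lemma less_OmegaOmega_iff: "\<alpha> < OmegaOmega \<longleftrightarrow> (\<exists>a. \<alpha> = Below a)"
  by (cases \<alpha>) auto

lemma zero_ordww_eq: "(0::ordww) = Below 0"
  by (simp add: zero_ordww_def)

lemma ordww_le_OmegaOmega: "(\<alpha>::ordww) \<le> OmegaOmega"
  by (cases \<alpha>) (auto simp: less_eq_ordww_def)


section \<open>Ordinal arithmetic on Cantor normal forms\<close>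

text \<open>Otherwise \<open>simp\<close> rewrites \<open>omega = omega_pow 1\<close> to \<open>omega_pow (Suc 0)\<close>.\<close>

declare One_nat_def [simp del]

lemma coeff_one: "coeff 1 i = (if i = 0 then 1 else 0)"
  by (simp add: lookup_one when_def)

lemma coeff_single: "coeff (Poly_Mapping.single k v) i = (if i = k then v else 0)"
  by (simp add: lookup_single when_def)

lemma one_ordww_eq: "(1::ordww) = Below 1"
  unfolding one_ordww_def single_one ..

lemma top_exp_ge: "coeff a i \<noteq> 0 \<Longrightarrow> i \<le> top_exp a"
  unfolding top_exp_def by (simp add: in_keys_iff)

lemma top_exp_one: "top_exp 1 = 0"
  by (simp add: top_exp_def)

definition cnf_finite :: "(nat \<Rightarrow>\<^sub>0 nat) \<Rightarrow> bool" where
  "cnf_finite a \<longleftrightarrow> (\<forall>i>0. coeff a i = 0)"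

lemma Below_less_omega_iff: "Below a < omega \<longleftrightarrow> cnf_finite a"
proof
  assume "Below a < omega"
  then obtain m where m: "coeff a m < coeff (Poly_Mapping.single 1 1) m"
      "\<forall>i>m. coeff a i = coeff (Poly_Mapping.single 1 1) i"
    by (auto simp: omega_pow_def cnf_less_iff)
  then have "m = 1" by (auto simp: coeff_single split: if_splits)
  with m show "cnf_finite a"
    unfolding cnf_finite_def by (auto simp: coeff_single split: if_splits)
      (metis One_nat_def less_one nat_neq_iff)
next
  assume "cnf_finite a"
  then show "Below a < omega"
    by (auto simp: omega_pow_def cnf_less_iff cnf_finite_def coeff_single intro!: exI[of _ 1])
qed

lemma top_exp_eq_0_iff: "a \<noteq> 0 \<Longrightarrow> top_exp a = 0 \<longleftrightarrow> cnf_finite a"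
proof
  assume "a \<noteq> 0" "cnf_finite a"
  then have "Poly_Mapping.keys a = {0}"
    unfolding cnf_finite_def by (auto simp: in_keys_iff) (metis gr0I keys_eq_empty in_keys_iff ex_in_conv)
  then show "top_exp a = 0" by (simp add: top_exp_def)
qed (use top_exp_ge in \<open>fastforce simp: cnf_finite_def\<close>)

lemma cnf_finite_plus_one_iff: "cnf_finite (a + 1) \<longleftrightarrow> cnf_finite a"
  by (simp add: cnf_finite_def lookup_add coeff_one)

lemma cnf_finite_coeff_0: "cnf_finite a \<Longrightarrow> a \<noteq> 0 \<Longrightarrow> coeff a 0 \<noteq> 0"
  unfolding cnf_finite_def by (metis gr0I poly_mapping_eqI lookup_zero)

lemma Abs_poly_mapping_eqI: "(\<And>i. h i = coeff p i) \<Longrightarrow> Abs_poly_mapping h = p"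
  by (metis ext lookup_inverse)

lemma minus_one_plus_one: "coeff b 0 \<noteq> 0 \<Longrightarrow> b - 1 + 1 = b"
  by (rule poly_mapping_eqI) (simp add: lookup_add lookup_minus coeff_one)

lemma Below_plus_one: "Below a + 1 = Below (a + 1)"
proof -
  have "cnf_add a 1 = a + 1"
    unfolding cnf_add_def Let_def top_exp_one
    by (simp, intro Abs_poly_mapping_eqI) (simp add: lookup_add coeff_one)
  then show ?thesis by (simp add: plus_ordww_def one_ordww_eq)
qed

lemma OmegaOmega_plus_one: "OmegaOmega + 1 = OmegaOmega"
  by (simp add: plus_ordww_def)

lemma one_plus_Below: "1 + Below a = Below (if cnf_finite a then a + 1 else a)"
proof -
  have "cnf_add 1 a = (if cnf_finite a then a + 1 else a)"
  proof (cases "a = 0")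
    case True
    then show ?thesis by (simp add: cnf_add_def cnf_finite_def)
  next
    case False
    have high: "coeff a i = 0" if "top_exp a < i" for i
      using top_exp_ge[of a i] that by force
    show ?thesis
    proof (cases "cnf_finite a")
      case True
      then have "top_exp a = 0" using top_exp_eq_0_iff[OF False] by simp
      with False True show ?thesis unfolding cnf_add_def Let_def
        by (simp, intro Abs_poly_mapping_eqI) (auto simp: lookup_add coeff_one cnf_finite_def)
    next
      case infinite: False
      then have "top_exp a \<noteq> 0" using top_exp_eq_0_iff[OF False] by simp
      with False infinite high show ?thesis unfolding cnf_add_def Let_def
        by (simp, intro Abs_poly_mapping_eqI) (auto simp: coeff_one)
    qed
  qed
  then show ?thesis by (simp add: plus_ordww_def one_ordww_eq)
qed

lemma one_plus_eq: "1 + \<alpha> = (if \<alpha> < omega then \<alpha> + 1 else \<alpha>)"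
proof (cases \<alpha>)
  case (Below a)
  then show ?thesis by (simp add: one_plus_Below Below_plus_one Below_less_omega_iff)
qed (simp add: plus_ordww_def one_ordww_eq)

definition cnf_shift :: "nat \<Rightarrow> (nat \<Rightarrow>\<^sub>0 nat) \<Rightarrow> (nat \<Rightarrow>\<^sub>0 nat)" where
  "cnf_shift n b = Abs_poly_mapping (\<lambda>i. if n \<le> i then coeff b (i - n) else 0)"

lemma coeff_cnf_shift: "coeff (cnf_shift n b) i = (if n \<le> i then coeff b (i - n) else 0)"
proof -
  have "{i. (if n \<le> i then coeff b (i - n) else 0) \<noteq> 0} \<subseteq> (\<lambda>j. j + n) ` {j. coeff b j \<noteq> 0}"
    by (auto simp: image_iff split: if_splits) (metis le_add_diff_inverse2)
  then have "finite {i. (if n \<le> i then coeff b (i - n) else 0) \<noteq> 0}"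
    by (rule finite_subset) simp
  then show ?thesis unfolding cnf_shift_def by simp
qed

lemma cnf_shift_eq_0_iff: "cnf_shift n b = 0 \<longleftrightarrow> b = 0"
proof
  assume "cnf_shift n b = 0"
  then have "coeff b j = 0" for j
    using coeff_cnf_shift[of n b "j + n"] by simp
  then show "b = 0" by (intro poly_mapping_eqI) simp
qed (intro poly_mapping_eqI, simp add: coeff_cnf_shift)

lemma cnf_shift_surj: "\<forall>i<n. coeff c i = 0 \<Longrightarrow> \<exists>b. c = cnf_shift n b"
proof -
  assume low: "\<forall>i<n. coeff c i = 0"
  have "finite ((\<lambda>i. i + n) -` {j. coeff c j \<noteq> 0})"
    by (rule finite_vimageI) (simp_all add: inj_on_def)
  then have "finite {i. coeff c (i + n) \<noteq> 0}"
    by (simp add: vimage_def)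
  then have "coeff (Abs_poly_mapping (\<lambda>i. coeff c (i + n))) = (\<lambda>i. coeff c (i + n))"
    by simp
  then have "c = cnf_shift n (Abs_poly_mapping (\<lambda>i. coeff c (i + n)))"
    using low by (intro poly_mapping_eqI) (auto simp: coeff_cnf_shift not_le)
  then show ?thesis ..
qed

lemma single_one_neq_zero: "Poly_Mapping.single n (1::nat) \<noteq> 0"
  by (metis lookup_single_eq lookup_zero zero_neq_one)

lemma omega_pow_times_Below: "omega_pow n * Below b = Below (cnf_shift n b)"
proof -
  have "cnf_mult (Poly_Mapping.single n 1) b = cnf_shift n b"
  proof (cases "b = 0")
    case True
    then show ?thesis by (intro poly_mapping_eqI) (simp add: cnf_mult_def coeff_cnf_shift)
  next
    case False
    have "top_exp (Poly_Mapping.single n 1) = n" by (simp add: top_exp_def)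
    with False show ?thesis
      unfolding cnf_mult_def Let_def cnf_shift_def
      by (simp add: single_one_neq_zero, intro arg_cong[where f = Abs_poly_mapping] ext)
        (auto simp: coeff_single)
  qed
  then show ?thesis by (simp add: times_ordww_def omega_pow_def)
qed

lemma omega_pow_times_OmegaOmega: "omega_pow n * OmegaOmega = OmegaOmega"
  by (simp add: times_ordww_def omega_pow_def single_one_neq_zero)

lemma less_plus_one: "\<alpha> < OmegaOmega \<Longrightarrow> \<alpha> < \<alpha> + 1"
  by (auto simp: less_OmegaOmega_iff Below_plus_one cnf_less_iff lookup_add coeff_one
      intro!: exI[of _ 0])

lemma plus_one_strict_mono: "(\<alpha>::ordww) < \<beta> \<Longrightarrow> \<alpha> + 1 < \<beta> + 1"
  by (cases \<alpha>; cases \<beta>)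
    (auto simp: Below_plus_one OmegaOmega_plus_one cnf_less_iff lookup_add coeff_one)

lemma one_plus_strict_mono: "(\<alpha>::ordww) < \<beta> \<Longrightarrow> 1 + \<alpha> < 1 + \<beta>"
proof -
  assume "\<alpha> < \<beta>"
  have "\<alpha> + 1 < omega" if "\<alpha> < omega"
    using that by (cases \<alpha>) (auto simp: Below_plus_one Below_less_omega_iff cnf_finite_plus_one_iff)
  moreover have "\<alpha> + 1 < \<beta>" if "\<alpha> < omega" "\<not> \<beta> < omega"
    using that calculation by (meson le_less_trans not_less)
  ultimately show ?thesis
    using \<open>\<alpha> < \<beta>\<close> plus_one_strict_mono[of \<alpha> \<beta>] less_trans[of \<beta> \<alpha> omega]
    by (auto simp: one_plus_eq)
qed

lemma cnf_shift_strict_mono: "cnf_less a b \<Longrightarrow> cnf_less (cnf_shift n a) (cnf_shift n b)"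
proof -
  assume "cnf_less a b"
  then obtain m where m: "coeff a m < coeff b m" "\<forall>i>m. coeff a i = coeff b i"
    unfolding cnf_less_iff by blast
  show ?thesis unfolding cnf_less_iff
  proof (intro exI[of _ "m + n"] conjI allI impI)
    show "coeff (cnf_shift n a) (m + n) < coeff (cnf_shift n b) (m + n)"
      using m(1) by (simp add: coeff_cnf_shift)
    fix i assume "m + n < i"
    then show "coeff (cnf_shift n a) i = coeff (cnf_shift n b) i"
      using m(2) by (simp add: coeff_cnf_shift)
  qed
qed

lemma omega_pow_times_strict_mono: "(\<alpha>::ordww) < \<beta> \<Longrightarrow> omega_pow n * \<alpha> < omega_pow n * \<beta>"
  by (cases \<alpha>; cases \<beta>)
    (auto simp: omega_pow_times_Below omega_pow_times_OmegaOmega cnf_shift_strict_mono)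

lemma skip_omega_strict_mono:
  assumes "\<alpha> < \<beta>" and "\<beta> < OmegaOmega"
  shows "(if \<alpha> < omega then \<alpha> else \<alpha> + 1) < (if \<beta> < omega then \<beta> else \<beta> + 1)"
  using assms less_plus_one[of \<beta>] plus_one_strict_mono[of \<alpha> \<beta>]
  by (auto dest: less_trans)

section \<open>Positions of the iterated derived sets\<close>

text \<open>For \<open>n \<ge> 1\<close>: the nonzero multiples of \<open>\<omega>^n\<close>, i.e. the \<open>\<beta> = \<omega>^n (1 + \<alpha>)\<close>.\<close>

definition derived_position :: "nat \<Rightarrow> ordww \<Rightarrow> bool" where
  "derived_position n \<beta> \<longleftrightarrow> n = 0 \<or>
     (case \<beta> of Below c \<Rightarrow> c \<noteq> 0 \<and> (\<forall>i<n. coeff c i = 0) | OmegaOmega \<Rightarrow> True)"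

text \<open>In a well-order this says that \<open>\<beta>\<close> is a limit point of \<open>A\<close> in the order topology.\<close>

definition order_limpt :: "'a::linorder set \<Rightarrow> 'a \<Rightarrow> bool" where
  "order_limpt A \<beta> \<longleftrightarrow> (\<exists>\<gamma>. \<gamma> < \<beta>) \<and> (\<forall>\<gamma><\<beta>. \<exists>\<delta>\<in>A. \<gamma> < \<delta> \<and> \<delta> < \<beta>)"

lemma derived_position_Below:
  "derived_position n (Below c) \<longleftrightarrow> n = 0 \<or> (c \<noteq> 0 \<and> (\<forall>i<n. coeff c i = 0))"
  by (simp add: derived_position_def)

lemma derived_position_0 [simp]: "derived_position 0 \<beta>"
  by (simp add: derived_position_def)

lemma derived_position_OmegaOmega [simp]: "derived_position n OmegaOmega"
  by (simp add: derived_position_def)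

lemma not_less_zero_ordww: "\<not> (\<alpha>::ordww) < 0"
  by (cases \<alpha>) (auto simp: zero_ordww_eq cnf_less_iff)

lemma ex_less_ordww_iff: "(\<exists>\<gamma>. \<gamma> < \<beta>) \<longleftrightarrow> (\<beta>::ordww) \<noteq> 0"
  by (metis not_less_zero_ordww linorder_neqE)

lemma least_nonzero_coeff:
  assumes "g \<noteq> 0"
  obtains m where "coeff g m \<noteq> 0" and "\<forall>i<m. coeff g i = 0"
proof
  have "\<exists>j. coeff g j \<noteq> 0"
    using assms poly_mapping_eqI[of g 0] by (metis lookup_zero)
  then show "coeff g (LEAST i. coeff g i \<noteq> 0) \<noteq> 0" by (rule LeastI_ex)
  show "\<forall>i<(LEAST i. coeff g i \<noteq> 0). coeff g i = 0"
    using not_less_Least by blast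
qed

lemma omega_pow_multiple_between:
  assumes "g \<noteq> 0" and g_low: "\<forall>i\<le>n. coeff g i = 0" and "cnf_less h g"
  shows "\<exists>d. d \<noteq> 0 \<and> (\<forall>i<n. coeff d i = 0) \<and> cnf_less h d \<and> cnf_less d g"
proof -
  obtain m where gm: "coeff g m \<noteq> 0" and g_below_m: "\<forall>i<m. coeff g i = 0"
    using least_nonzero_coeff[OF assms(1)] .
  have "n < m" using gm g_low by (meson not_le)
  text \<open>Trade one copy of \<open>\<omega>^m\<close> in \<open>g\<close> for \<open>h\<^sub>m\<^sub>-\<^sub>1 + 1\<close> copies of \<open>\<omega>^(m-1)\<close>.\<close>
  define dd where "dd i = (if m < i then coeff g i else if i = m then coeff g m - 1
      else if i = m - 1 then coeff h (m - 1) + 1 else 0)" for i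
  have "finite {i. dd i \<noteq> 0}"
    by (rule finite_subset[of _ "insert (m - 1) {i. coeff g i \<noteq> 0}"])
      (auto simp: dd_def split: if_splits)
  then obtain d where d: "coeff d = dd" by (metis lookup_Abs_poly_mapping)
  have m1: "m - 1 < m" using \<open>n < m\<close> by simp
  have "coeff d (m - 1) \<noteq> 0" using m1 by (simp add: d dd_def)
  then have "d \<noteq> 0" by auto
  moreover have "\<forall>i<n. coeff d i = 0" using \<open>n < m\<close> by (simp add: d dd_def)
  moreover have "cnf_less d g"
    unfolding cnf_less_iff using gm by (intro exI[of _ m]) (auto simp: d dd_def)
  moreover have "cnf_less h d"
  proof -
    obtain k where k: "coeff h k < coeff g k" "\<forall>i>k. coeff h i = coeff g i"
      using \<open>cnf_less h g\<close> cnf_less_iff by blast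
    have "m \<le> k" using k(1) g_below_m by (metis leI less_nat_zero_code)
    have "coeff d m = coeff g m - 1" using m1 by (simp add: d dd_def)
    then consider "m < k" | "k = m" "coeff h m < coeff d m" | "k = m" "coeff h m = coeff d m"
      using k(1) \<open>m \<le> k\<close> by fastforce
    then show ?thesis
    proof cases
      case 1
      with k show ?thesis
        unfolding cnf_less_iff by (intro exI[of _ k]) (auto simp: d dd_def)
    next
      case 2
      with k show ?thesis
        unfolding cnf_less_iff by (intro exI[of _ m]) (auto simp: d dd_def)
    next
      case 3
      with k m1 show ?thesis
        unfolding cnf_less_iff by (intro exI[of _ "m - 1"]) (auto simp: d dd_def)
    qed
  qed
  ultimately show ?thesis by blast
qed

lemma no_omega_pow_multiple_between:
  assumes gm: "coeff g m \<noteq> 0" and g_below_m: "\<forall>i<m. coeff g i = 0"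
  obtains c where "cnf_less c g" and "\<And>d. cnf_less c d \<Longrightarrow> cnf_less d g \<Longrightarrow> \<exists>i<m. coeff d i \<noteq> 0"
proof -
  define cc where "cc i = (if i = m then coeff g m - 1 else coeff g i)" for i
  have "finite {i. cc i \<noteq> 0}"
    by (rule finite_subset[of _ "{i. coeff g i \<noteq> 0}"]) (auto simp: cc_def split: if_splits)
  then obtain c where c: "coeff c = cc" by (metis lookup_Abs_poly_mapping)
  have "cnf_less c g"
    unfolding cnf_less_iff using gm by (intro exI[of _ m]) (auto simp: c cc_def)
  moreover have "\<exists>i<m. coeff d i \<noteq> 0" if between: "cnf_less c d" "cnf_less d g" for d
  proof -
    obtain k l where
        k: "coeff c k < coeff d k" "\<forall>i>k. coeff c i = coeff d i" and
        l: "coeff d l < coeff g l" "\<forall>i>l. coeff d i = coeff g i"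
      using between unfolding cnf_less_iff by blast
    have "l = m"
    proof (rule ccontr)
      assume "l \<noteq> m"
      moreover have "m \<le> l" using l(1) g_below_m by (metis leI less_nat_zero_code)
      ultimately have "cnf_less d c"
        unfolding cnf_less_iff using l by (intro exI[of _ l]) (auto simp: c cc_def)
      then show False using \<open>cnf_less c d\<close> cnf_less_asym by blast
    qed
    have "k < m"
    proof (rule ccontr)
      assume "\<not> k < m"
      then consider "m < k" | "k = m" by linarith
      then show False
        using k l \<open>l = m\<close> by cases (auto simp: c cc_def)
    qed
    then show ?thesis using k(1) by auto
  qed
  ultimately show ?thesis using that by blast
qed

lemma Below_less_omega_pow:
  assumes "top_exp h < k"
  shows "Below h < omega_pow k"
proof -
  have "coeff h i = 0" if "k \<le> i" for i
    using top_exp_ge[of h i] assms that by linarith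
  then show ?thesis
    unfolding omega_pow_def less_ordww_simps cnf_less_iff
    by (intro exI[of _ k]) (auto simp: coeff_single)
qed

lemma derived_position_omega_pow: "n \<le> k \<Longrightarrow> derived_position n (omega_pow k)"
  by (auto simp: omega_pow_def derived_position_Below coeff_single single_one_neq_zero)

lemma derived_position_Suc_iff:
  "derived_position (Suc n) \<beta> \<longleftrightarrow> order_limpt {\<gamma>. derived_position n \<gamma>} \<beta>"
proof
  assume pos: "derived_position (Suc n) \<beta>"
  have between: "\<exists>\<delta>. derived_position n \<delta> \<and> \<gamma> < \<delta> \<and> \<delta> < \<beta>" if "\<gamma> < \<beta>" for \<gamma>
  proof -
    obtain h where h: "\<gamma> = Below h" using \<open>\<gamma> < \<beta>\<close> by (cases \<gamma>) auto
    show ?thesis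
    proof (cases \<beta>)
      case OmegaOmega
      let ?k = "Suc (n + top_exp h)"
      have "derived_position n (omega_pow ?k)" "\<gamma> < omega_pow ?k" "omega_pow ?k < \<beta>"
        using derived_position_omega_pow Below_less_omega_pow OmegaOmega h
        by (auto simp: omega_pow_def)
      then show ?thesis by blast
    next
      case (Below g)
      with pos have "g \<noteq> 0" "\<forall>i\<le>n. coeff g i = 0"
        by (auto simp: derived_position_Below less_Suc_eq_le)
      moreover have "cnf_less h g" using \<open>\<gamma> < \<beta>\<close> Below h by simp
      ultimately obtain d where "d \<noteq> 0" "\<forall>i<n. coeff d i = 0" "cnf_less h d" "cnf_less d g"
        using omega_pow_multiple_between by blast
      then show ?thesis
        using Below h by (intro exI[of _ "Below d"]) (simp add: derived_position_Below)
    qed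
  qed
  have "\<beta> \<noteq> 0" using pos by (auto simp: derived_position_def zero_ordww_eq)
  with between show "order_limpt {\<gamma>. derived_position n \<gamma>} \<beta>"
    unfolding order_limpt_def ex_less_ordww_iff by auto
next
  assume lim: "order_limpt {\<gamma>. derived_position n \<gamma>} \<beta>"
  show "derived_position (Suc n) \<beta>"
  proof (rule ccontr)
    assume not_pos: "\<not> derived_position (Suc n) \<beta>"
    then obtain g where \<beta>: "\<beta> = Below g" by (cases \<beta>) auto
    have "g \<noteq> 0" using lim \<beta> by (auto simp: order_limpt_def ex_less_ordww_iff zero_ordww_eq)
    then obtain m where gm: "coeff g m \<noteq> 0" and g_below_m: "\<forall>i<m. coeff g i = 0"
      by (rule least_nonzero_coeff)
    obtain i where "i \<le> n" "coeff g i \<noteq> 0"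
      using not_pos \<beta> \<open>g \<noteq> 0\<close> by (auto simp: derived_position_Below less_Suc_eq_le)
    then have "m \<le> n" using g_below_m by (meson le_trans not_le)
    obtain c where "cnf_less c g"
      and gap: "\<And>d. cnf_less c d \<Longrightarrow> cnf_less d g \<Longrightarrow> \<exists>i<m. coeff d i \<noteq> 0"
      using no_omega_pow_multiple_between[OF gm g_below_m] by blast
    then have "Below c < \<beta>" using \<beta> by simp
    then obtain \<delta> where \<delta>: "derived_position n \<delta>" "Below c < \<delta>" "\<delta> < Below g"
      using lim \<beta> unfolding order_limpt_def by blast
    then obtain d where d: "\<delta> = Below d" by (cases \<delta>) auto
    then obtain i where "i < m" "coeff d i \<noteq> 0" using gap \<delta> by auto
    then show False using \<delta>(1) d \<open>m \<le> n\<close> by (auto simp: derived_position_Below)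
  qed
qed

section \<open>Decreasing enumerations of compact sets of reals\<close>

locale decreasing_enumeration =
  fixes K :: "real set" and f :: "'a::wellorder \<Rightarrow> real"
  assumes compact: "compact K"
    and bij: "bij_betw f UNIV K"
    and decreasing: "\<beta> < \<gamma> \<Longrightarrow> f \<gamma> < f \<beta>"
begin

lemma K_eq_range: "K = range f"
  using bij by (simp add: bij_betw_def)

lemma inj: "inj f"
  using bij by (simp add: bij_betw_def)

lemma less_iff: "f \<gamma> < f \<beta> \<longleftrightarrow> \<beta> < \<gamma>"
  by (metis decreasing less_asym linorder_neqE)

lemma le_iff: "f \<gamma> \<le> f \<beta> \<longleftrightarrow> \<beta> \<le> \<gamma>"
  by (meson less_iff not_less)

text \<open>Compactness: the infimum of the \<open>f \<gamma>\<close>, \<open>\<gamma> < \<beta>\<close>, is some \<open>f \<sigma>\<close>, and no \<open>\<sigma> < \<beta>\<close> can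
  serve since \<open>\<beta>\<close> is a limit.\<close>

lemma approach_at_limit:
  assumes "order_limpt UNIV \<beta>" and "e > 0"
  shows "\<exists>\<gamma><\<beta>. f \<gamma> < f \<beta> + e"
proof (rule ccontr)
  assume "\<not> (\<exists>\<gamma><\<beta>. f \<gamma> < f \<beta> + e)"
  then have far: "f \<beta> + e \<le> f \<gamma>" if "\<gamma> < \<beta>" for \<gamma>
    using that by (meson not_less)
  let ?S = "f ` {\<gamma>. \<gamma> < \<beta>}"
  have ne: "?S \<noteq> {}" using assms(1) by (auto simp: order_limpt_def)
  have SK: "?S \<subseteq> K" using K_eq_range by auto
  then have bdd: "bdd_below ?S"
    using compact by (meson bdd_below_mono bounded_imp_bdd_below compact_imp_bounded)
  have "Inf ?S \<in> K"
    using closure_contains_Inf[OF ne bdd] closure_minimal[OF SK] compact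
    by (auto simp: compact_imp_closed)
  then obtain \<sigma> where \<sigma>: "Inf ?S = f \<sigma>" using K_eq_range by auto
  have "f \<beta> + e \<le> Inf ?S" using ne by (rule cInf_greatest) (auto intro: far)
  then have "\<sigma> < \<beta>" using \<sigma> \<open>e > 0\<close> by (simp add: less_iff[symmetric])
  then obtain \<delta> where "\<sigma> < \<delta>" "\<delta> < \<beta>" using assms(1) by (auto simp: order_limpt_def)
  then have "Inf ?S \<le> f \<delta>" "f \<delta> < f \<sigma>" using bdd by (auto intro: cInf_lower decreasing)
  then show False using \<sigma> by simp
qed

text \<open>The gap is \<open>f \<beta> - f (succ \<beta>)\<close>, or anything if \<open>\<beta>\<close> is the last element.\<close>

lemma gap_below: "\<exists>g>0. \<forall>\<delta>. f \<delta> < f \<beta> \<longrightarrow> f \<delta> \<le> f \<beta> - g"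
proof (cases "\<exists>\<delta>. \<beta> < \<delta>")
  case True
  let ?succ = "LEAST \<delta>. \<beta> < \<delta>"
  have "f ?succ < f \<beta>" using LeastI_ex[OF True] by (rule decreasing)
  moreover have "f \<delta> \<le> f ?succ" if "f \<delta> < f \<beta>" for \<delta>
    using that by (simp add: less_iff le_iff Least_le)
  ultimately show ?thesis by (intro exI[of _ "f \<beta> - f ?succ"]) auto
next
  case False
  then show ?thesis by (intro exI[of _ 1]) (auto simp: less_iff)
qed

lemma islimpt_image_iff: "f \<beta> islimpt f ` A \<longleftrightarrow> order_limpt A \<beta>"
proof
  assume lim: "order_limpt A \<beta>"
  show "f \<beta> islimpt f ` A"
    unfolding islimpt_approachable
  proof (intro allI impI)
    fix e :: real assume "e > 0"
    have "order_limpt UNIV \<beta>" using lim by (auto simp: order_limpt_def)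
    then obtain \<gamma> where \<gamma>: "\<gamma> < \<beta>" "f \<gamma> < f \<beta> + e"
      using approach_at_limit \<open>e > 0\<close> by blast
    then obtain \<delta> where \<delta>: "\<delta> \<in> A" "\<gamma> < \<delta>" "\<delta> < \<beta>" using lim by (auto simp: order_limpt_def)
    then have "f \<beta> < f \<delta>" "f \<delta> < f \<gamma>" by (auto intro: decreasing)
    with \<delta>(1) \<gamma>(2) show "\<exists>y\<in>f ` A. y \<noteq> f \<beta> \<and> dist y (f \<beta>) < e"
      by (intro bexI[of _ "f \<delta>"]) (auto simp: dist_real_def)
  qed
next
  assume lp: "f \<beta> islimpt f ` A"
  obtain g where "g > 0" and gap: "\<And>\<delta>. f \<delta> < f \<beta> \<Longrightarrow> f \<delta> \<le> f \<beta> - g"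
    using gap_below by blast
  have above: "\<exists>\<delta>\<in>A. \<delta> < \<beta> \<and> f \<delta> < f \<beta> + e" if "e > 0" "e \<le> g" for e
  proof -
    obtain \<delta> where \<delta>: "\<delta> \<in> A" "f \<delta> \<noteq> f \<beta>" "dist (f \<delta>) (f \<beta>) < e"
      using lp \<open>e > 0\<close> unfolding islimpt_approachable by blast
    then have "\<not> f \<delta> < f \<beta>" using gap[of \<delta>] that by (auto simp: dist_real_def)
    with \<delta> show ?thesis
      by (intro bexI[of _ \<delta>]) (auto simp: dist_real_def less_iff[symmetric])
  qed
  have "\<exists>\<delta>\<in>A. \<gamma> < \<delta> \<and> \<delta> < \<beta>" if "\<gamma> < \<beta>" for \<gamma>
  proof -
    have "f \<beta> < f \<gamma>" using that by (rule decreasing)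
    then obtain \<delta> where "\<delta> \<in> A" "\<delta> < \<beta>" "f \<delta> < f \<beta> + min g (f \<gamma> - f \<beta>)"
      using above[of "min g (f \<gamma> - f \<beta>)"] \<open>g > 0\<close> by auto
    then show ?thesis by (intro bexI[of _ \<delta>]) (auto simp: less_iff[symmetric])
  qed
  moreover have "\<exists>\<gamma>. \<gamma> < \<beta>" using above[of g] \<open>g > 0\<close> by auto
  ultimately show "order_limpt A \<beta>" by (simp add: order_limpt_def)
qed

lemma derived_image: "derived (f ` A) = f ` {\<beta>. order_limpt A \<beta>}"
proof
  show "derived (f ` A) \<subseteq> f ` {\<beta>. order_limpt A \<beta>}"
  proof
    fix y assume "y \<in> derived (f ` A)"
    then have lp: "y islimpt f ` A" by (simp add: derived_def)
    then have "y islimpt K" using K_eq_range islimpt_subset by blast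
    then have "y \<in> K" using compact by (meson closed_limpt compact_imp_closed)
    then obtain \<beta> where "y = f \<beta>" using K_eq_range by auto
    with lp show "y \<in> f ` {\<beta>. order_limpt A \<beta>}" by (simp add: islimpt_image_iff)
  qed
  show "f ` {\<beta>. order_limpt A \<beta>} \<subseteq> derived (f ` A)"
    by (auto simp: derived_def islimpt_image_iff)
qed

end

lemma strict_mono_on_initial_segment_ge:
  fixes g :: "'a::wellorder \<Rightarrow> 'a"
  assumes mono: "strict_mono_on {x. x < \<beta>} g" and into: "\<And>x. x < \<beta> \<Longrightarrow> g x < \<beta>"
  shows "x < \<beta> \<Longrightarrow> x \<le> g x"
proof (induction x rule: less_induct)
  case (less x)
  show ?case
  proof (rule ccontr)
    assume "\<not> x \<le> g x"
    then have "g x < x" by simp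
    moreover have "g x < \<beta>" using into less.prems by simp
    ultimately have "g x \<le> g (g x)" "g (g x) < g x"
      using less.IH less.prems strict_mono_onD[OF mono] by auto
    then show False by simp
  qed
qed

lemma strict_mono_on_initial_segment_le:
  fixes g :: "'a::wellorder \<Rightarrow> 'a"
  assumes mono: "strict_mono_on {x. x < \<beta>} g" and into: "\<And>x. x < \<beta> \<Longrightarrow> g x < \<sigma>"
  shows "\<beta> \<le> \<sigma>"
proof (rule ccontr)
  assume "\<not> \<beta> \<le> \<sigma>"
  then have "\<sigma> < \<beta>" by simp
  then have "\<sigma> \<le> g \<sigma>"
    using strict_mono_on_initial_segment_ge[OF mono] into by (meson less_trans)
  moreover have "g \<sigma> < \<sigma>" using into \<open>\<sigma> < \<beta>\<close> .
  ultimately show False by simp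
qed

lemma initial_segments_iso_imp_eq:
  fixes g :: "'a::wellorder \<Rightarrow> 'a"
  assumes bij: "bij_betw g {x. x < \<beta>} {x. x < \<sigma>}" and mono: "strict_mono_on {x. x < \<beta>} g"
  shows "\<beta> = \<sigma>"
proof (rule antisym)
  show "\<beta> \<le> \<sigma>"
    by (rule strict_mono_on_initial_segment_le[OF mono]) (use bij in \<open>auto simp: bij_betw_def\<close>)
  let ?g' = "inv_into {x. x < \<beta>} g"
  have bij': "bij_betw ?g' {x. x < \<sigma>} {x. x < \<beta>}"
    using bij by (rule bij_betw_inv_into)
  have "strict_mono_on {x. x < \<sigma>} ?g'"
  proof (rule strict_mono_onI)
    fix x y assume "x \<in> {x. x < \<sigma>}" "y \<in> {x. x < \<sigma>}" "x < y"
    moreover have "g (?g' z) = z" if "z < \<sigma>" for z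
      using bij that by (auto simp: bij_betw_def f_inv_into_f)
    ultimately show "?g' x < ?g' y"
      using bij' strict_mono_on_leD[OF mono, of "?g' y" "?g' x"]
      by (auto simp: bij_betw_def not_less[symmetric])
  qed
  then show "\<sigma> \<le> \<beta>"
    by (rule strict_mono_on_initial_segment_le) (use bij' in \<open>auto simp: bij_betw_def\<close>)
qed

locale ordww_enumeration = decreasing_enumeration K f for K and f :: "ordww \<Rightarrow> real"
begin

lemma derived_iterate: "(derived ^^ n) K = f ` {\<beta>. derived_position n \<beta>}"
proof (induction n)
  case 0
  then show ?case using K_eq_range by (simp add: derived_position_def)
next
  case (Suc n)
  then show ?case by (simp add: derived_image derived_position_Suc_iff)
qed

lemma is_at_image:
  assumes mono: "strict_mono_on D h" and down: "\<And>\<alpha> \<gamma>. \<alpha> \<in> D \<Longrightarrow> \<gamma> < \<alpha> \<Longrightarrow> \<gamma> \<in> D"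
    and "\<alpha> \<in> D"
  shows "is_at (f ` h ` D) \<alpha> (f (h \<alpha>))"
proof -
  have earlier: "{y \<in> f ` h ` D. f (h \<alpha>) < y} = (f \<circ> h) ` {\<gamma>. \<gamma> < \<alpha>}"
  proof (intro set_eqI iffI)
    fix y assume "y \<in> {y \<in> f ` h ` D. f (h \<alpha>) < y}"
    then obtain \<gamma> where "\<gamma> \<in> D" "y = f (h \<gamma>)" "h \<gamma> < h \<alpha>" by (auto simp: less_iff)
    then show "y \<in> (f \<circ> h) ` {\<gamma>. \<gamma> < \<alpha>}"
      using strict_mono_on_leD[OF mono \<open>\<alpha> \<in> D\<close>] by (auto simp: not_less[symmetric])
  next
    fix y assume "y \<in> (f \<circ> h) ` {\<gamma>. \<gamma> < \<alpha>}"
    then show "y \<in> {y \<in> f ` h ` D. f (h \<alpha>) < y}"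
      using down \<open>\<alpha> \<in> D\<close> strict_mono_onD[OF mono] by (auto intro: decreasing)
  qed
  have "(f \<circ> h) \<gamma> < (f \<circ> h) \<beta>" if "\<beta> < \<alpha>" "\<gamma> < \<alpha>" "\<beta> < \<gamma>" for \<beta> \<gamma>
    using that down \<open>\<alpha> \<in> D\<close> strict_mono_onD[OF mono] by (auto intro: decreasing)
  moreover from this have "inj_on (f \<circ> h) {\<gamma>. \<gamma> < \<alpha>}"
    by (intro inj_onI) (metis linorder_neqE mem_Collect_eq less_irrefl)
  ultimately show ?thesis
    unfolding is_at_def rev_otype_def earlier using \<open>\<alpha> \<in> D\<close>
    by (intro conjI exI[of _ "f \<circ> h"]) (auto intro: bij_betw_imageI)
qed

lemma is_at_unique:
  assumes "is_at K \<beta> y"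
  shows "y = f \<beta>"
proof -
  obtain \<sigma> where y: "y = f \<sigma>" using assms K_eq_range by (auto simp: is_at_def)
  have earlier: "{z \<in> K. f \<sigma> < z} = f ` {\<gamma>. \<gamma> < \<sigma>}"
    using K_eq_range by (auto simp: less_iff)
  obtain h where h: "bij_betw h {\<gamma>. \<gamma> < \<beta>} (f ` {\<gamma>. \<gamma> < \<sigma>})"
     and h_dec: "\<And>\<beta>' \<gamma>. \<beta>' < \<beta> \<Longrightarrow> \<gamma> < \<beta> \<Longrightarrow> \<beta>' < \<gamma> \<Longrightarrow> h \<gamma> < h \<beta>'"
    using assms unfolding is_at_def rev_otype_def y earlier by blast
  have f_bij: "bij_betw f {\<gamma>. \<gamma> < \<sigma>} (f ` {\<gamma>. \<gamma> < \<sigma>})"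
    using inj by (auto intro: bij_betw_imageI inj_on_subset)
  define g where "g = inv_into {\<gamma>. \<gamma> < \<sigma>} f \<circ> h"
  have "bij_betw g {\<gamma>. \<gamma> < \<beta>} {\<gamma>. \<gamma> < \<sigma>}"
    unfolding g_def using h bij_betw_inv_into[OF f_bij] by (rule bij_betw_trans)
  moreover have "strict_mono_on {\<gamma>. \<gamma> < \<beta>} g"
  proof (rule strict_mono_onI)
    fix a b assume "a \<in> {\<gamma>. \<gamma> < \<beta>}" "b \<in> {\<gamma>. \<gamma> < \<beta>}" "a < b"
    moreover have "f (g \<gamma>) = h \<gamma>" if "\<gamma> < \<beta>" for \<gamma>
    proof -
      have "h \<gamma> \<in> f ` {\<gamma>. \<gamma> < \<sigma>}" using h that by (auto simp: bij_betw_def)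
      then show ?thesis by (simp add: g_def f_inv_into_f)
    qed
    ultimately show "g a < g b" using h_dec by (simp flip: less_iff)
  qed
  ultimately have "\<beta> = \<sigma>" by (rule initial_segments_iso_imp_eq)
  then show ?thesis using y by simp
qed

lemma ord_at_eq: "ord_at K \<beta> = f \<beta>"
proof -
  have "is_at K \<beta> (f \<beta>)"
    using is_at_image[of UNIV id \<beta>] K_eq_range by (simp add: strict_mono_on_def)
  then show ?thesis unfolding ord_at_def using is_at_unique by blast
qed

end

section \<open>Reindexing the positions\<close>

lemma derived_position_cnf_shift_iff:
  "n \<ge> 1 \<Longrightarrow> derived_position n (Below (cnf_shift n b)) \<longleftrightarrow> b \<noteq> 0"
  by (simp add: derived_position_Below cnf_shift_eq_0_iff coeff_cnf_shift)

lemma derived_position_eq_range: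
  assumes "n \<ge> 1"
  shows "{\<beta>. derived_position n \<beta>} = range (\<lambda>\<alpha>. omega_pow n * (1 + \<alpha>))"
proof (intro set_eqI iffI)
  fix \<beta> assume "\<beta> \<in> range (\<lambda>\<alpha>. omega_pow n * (1 + \<alpha>))"
  then obtain \<alpha> where \<beta>: "\<beta> = omega_pow n * (1 + \<alpha>)" by blast
  show "\<beta> \<in> {\<beta>. derived_position n \<beta>}"
  proof (cases \<alpha>)
    case (Below a)
    have "(if cnf_finite a then a + 1 else a) \<noteq> 0"
      by (auto simp: cnf_finite_def poly_mapping_eq_iff lookup_add coeff_one fun_eq_iff)
    then show ?thesis using \<beta> Below assms
      by (simp add: one_plus_Below omega_pow_times_Below derived_position_cnf_shift_iff)
  next
    case OmegaOmega
    then show ?thesis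
      using \<beta> by (simp add: plus_ordww_def one_ordww_eq omega_pow_times_OmegaOmega)
  qed
next
  fix \<beta> assume "\<beta> \<in> {\<beta>. derived_position n \<beta>}"
  then have pos: "derived_position n \<beta>" by simp
  show "\<beta> \<in> range (\<lambda>\<alpha>. omega_pow n * (1 + \<alpha>))"
  proof (cases \<beta>)
    case (Below c)
    with pos assms have "c \<noteq> 0" "\<forall>i<n. coeff c i = 0" by (auto simp: derived_position_Below)
    then obtain b where c: "c = cnf_shift n b" and "b \<noteq> 0"
      using cnf_shift_surj cnf_shift_eq_0_iff by metis
    show ?thesis
    proof (cases "cnf_finite b")
      case True
      then have "b = b - 1 + 1" "cnf_finite (b - 1)"
        using \<open>b \<noteq> 0\<close> minus_one_plus_one cnf_finite_coeff_0 cnf_finite_plus_one_iff by metis+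
      then have "\<beta> = omega_pow n * (1 + Below (b - 1))"
        using Below c by (simp add: one_plus_Below omega_pow_times_Below)
      then show ?thesis by blast
    next
      case False
      then have "\<beta> = omega_pow n * (1 + Below b)"
        using Below c by (simp add: one_plus_Below omega_pow_times_Below)
      then show ?thesis by blast
    qed
  next
    case OmegaOmega
    then have "\<beta> = omega_pow n * (1 + OmegaOmega)"
      by (simp add: plus_ordww_def one_ordww_eq omega_pow_times_OmegaOmega)
    then show ?thesis by blast
  qed
qed

lemma not_derived_position_one_Below_iff:
  "\<not> derived_position 1 (Below c) \<longleftrightarrow> c = 0 \<or> coeff c 0 \<noteq> 0"
  by (auto simp: derived_position_Below)

lemma not_derived_position_one_eq_image:
  "{\<beta>. \<not> derived_position 1 \<beta>} = (\<lambda>\<alpha>. if \<alpha> < omega then \<alpha> else \<alpha> + 1) ` {\<alpha>. \<alpha> < OmegaOmega}"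
proof (intro set_eqI iffI)
  fix \<beta> assume "\<beta> \<in> (\<lambda>\<alpha>. if \<alpha> < omega then \<alpha> else \<alpha> + 1) ` {\<alpha>. \<alpha> < OmegaOmega}"
  then obtain \<alpha> where "\<alpha> < OmegaOmega" and \<beta>: "\<beta> = (if \<alpha> < omega then \<alpha> else \<alpha> + 1)"
    by blast
  then obtain a where \<alpha>: "\<alpha> = Below a" by (auto simp: less_OmegaOmega_iff)
  show "\<beta> \<in> {\<beta>. \<not> derived_position 1 \<beta>}"
  proof (cases "cnf_finite a")
    case True
    then have "\<beta> = Below a" using \<beta> \<alpha> by (simp add: Below_less_omega_iff)
    moreover have "a = 0 \<or> coeff a 0 \<noteq> 0" using True cnf_finite_coeff_0 by blast
    ultimately show ?thesis by (simp add: not_derived_position_one_Below_iff)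
  next
    case False
    then have "\<beta> = Below (a + 1)" using \<beta> \<alpha> by (simp add: Below_less_omega_iff Below_plus_one)
    then show ?thesis by (simp add: not_derived_position_one_Below_iff lookup_add coeff_one)
  qed
next
  fix \<beta> assume "\<beta> \<in> {\<beta>. \<not> derived_position 1 \<beta>}"
  then obtain c where \<beta>: "\<beta> = Below c" and c: "c = 0 \<or> coeff c 0 \<noteq> 0"
    by (cases \<beta>) (auto simp: not_derived_position_one_Below_iff)
  show "\<beta> \<in> (\<lambda>\<alpha>. if \<alpha> < omega then \<alpha> else \<alpha> + 1) ` {\<alpha>. \<alpha> < OmegaOmega}"
  proof (cases "cnf_finite c")
    case True
    then show ?thesis using \<beta> by (force simp: Below_less_omega_iff)
  next
    case False
    then have "c \<noteq> 0" by (auto simp: cnf_finite_def)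
    with c have "c - 1 + 1 = c" by (simp add: minus_one_plus_one)
    with False have "\<not> cnf_finite (c - 1)" by (metis cnf_finite_plus_one_iff)
    moreover have "\<beta> = Below (c - 1) + 1"
      using \<beta> \<open>c - 1 + 1 = c\<close> by (simp add: Below_plus_one)
    ultimately have "\<beta> = (if Below (c - 1) < omega then Below (c - 1) else Below (c - 1) + 1)"
      by (simp add: Below_less_omega_iff)
    then show ?thesis by force
  qed
qed



lemma derived_position_diff_eq_image:
  assumes "u \<ge> 1"
  shows "{\<beta>. derived_position u \<beta> \<and> \<not> derived_position (Suc u) \<beta>}
    = (\<lambda>\<alpha>. omega_pow u * (\<alpha> + 1)) ` {\<alpha>. \<alpha> < OmegaOmega}"
proof (intro set_eqI iffI)
  fix \<beta> assume "\<beta> \<in> (\<lambda>\<alpha>. omega_pow u * (\<alpha> + 1)) ` {\<alpha>. \<alpha> < OmegaOmega}"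
  then obtain \<alpha> where "\<alpha> < OmegaOmega" and \<beta>: "\<beta> = omega_pow u * (\<alpha> + 1)" by blast
  then obtain a where "\<alpha> = Below a" by (auto simp: less_OmegaOmega_iff)
  with \<beta> have "\<beta> = Below (cnf_shift u (a + 1))"
    by (simp add: Below_plus_one omega_pow_times_Below)
  moreover have "coeff (cnf_shift u (a + 1)) u \<noteq> 0"
    by (simp add: coeff_cnf_shift lookup_add coeff_one)
  moreover have "\<forall>i<u. coeff (cnf_shift u (a + 1)) i = 0"
    by (simp add: coeff_cnf_shift)
  ultimately show "\<beta> \<in> {\<beta>. derived_position u \<beta> \<and> \<not> derived_position (Suc u) \<beta>}"
    using assms by (simp add: derived_position_Below) (metis lessI less_numeral_extra(3) lookup_zero)
next
  fix \<beta> assume "\<beta> \<in> {\<beta>. derived_position u \<beta> \<and> \<not> derived_position (Suc u) \<beta>}"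
  then have pos: "derived_position u \<beta>" and not_pos: "\<not> derived_position (Suc u) \<beta>" by auto
  then obtain c where \<beta>: "\<beta> = Below c" by (cases \<beta>) auto
  with pos not_pos assms have low: "\<forall>i<u. coeff c i = 0" and "\<exists>i<Suc u. coeff c i \<noteq> 0"
    by (auto simp: derived_position_Below)
  then have "coeff c u \<noteq> 0" using less_Suc_eq by auto
  obtain b where c: "c = cnf_shift u b" using cnf_shift_surj[OF low] ..
  with \<open>coeff c u \<noteq> 0\<close> have "coeff b 0 \<noteq> 0" by (simp add: coeff_cnf_shift)
  then have "\<beta> = omega_pow u * (Below (b - 1) + 1)"
    using \<beta> c by (simp add: Below_plus_one omega_pow_times_Below minus_one_plus_one)
  then show "\<beta> \<in> (\<lambda>\<alpha>. omega_pow u * (\<alpha> + 1)) ` {\<alpha>. \<alpha> < OmegaOmega}" by force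
qed

context ordww_enumeration
begin

lemma derived_diff_eq_image:
  "(derived ^^ u) K - (derived ^^ Suc u) K
    = f ` {\<beta>. derived_position u \<beta> \<and> \<not> derived_position (Suc u) \<beta>}"
proof -
  have "(derived ^^ u) K - (derived ^^ Suc u) K
      = f ` ({\<beta>. derived_position u \<beta>} - {\<beta>. derived_position (Suc u) \<beta>})"
    by (simp only: derived_iterate image_set_diff[OF inj])
  then show ?thesis by (simp add: set_diff_eq)
qed

lemma is_at_derived:
  assumes "n \<ge> 1"
  shows "is_at ((derived ^^ n) K) \<alpha> (f (omega_pow n * (1 + \<alpha>)))"
  using is_at_image[of UNIV "\<lambda>\<alpha>. omega_pow n * (1 + \<alpha>)" \<alpha>]
  by (simp add: derived_iterate derived_position_eq_range[OF assms] strict_mono_on_def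
      omega_pow_times_strict_mono one_plus_strict_mono)

lemma is_at_isolated:
  assumes "\<alpha> < OmegaOmega"
  shows "is_at (K - derived K) \<alpha> (f (if \<alpha> < omega then \<alpha> else \<alpha> + 1))"
proof -
  have "K - derived K = f ` (\<lambda>\<alpha>. if \<alpha> < omega then \<alpha> else \<alpha> + 1) ` {\<alpha>. \<alpha> < OmegaOmega}"
    using derived_diff_eq_image[of 0] not_derived_position_one_eq_image by (simp add: One_nat_def)
  then show ?thesis
    using is_at_image[of "{\<alpha>. \<alpha> < OmegaOmega}" "\<lambda>\<alpha>. if \<alpha> < omega then \<alpha> else \<alpha> + 1" \<alpha>] assms
    by (simp add: strict_mono_on_def skip_omega_strict_mono)
qed

lemma is_at_derived_diff:
  assumes "u \<ge> 1" and "\<alpha> < OmegaOmega"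
  shows "is_at ((derived ^^ u) K - (derived ^^ Suc u) K) \<alpha> (f (omega_pow u * (\<alpha> + 1)))"
  unfolding derived_diff_eq_image derived_position_diff_eq_image[OF assms(1)]
  by (rule is_at_image)
    (use assms(2) in \<open>auto simp: strict_mono_on_def omega_pow_times_strict_mono plus_one_strict_mono\<close>)

end

theorem mainTheorem3:
  fixes K :: "real set" and \<rho> :: real and \<mu> :: nat
  assumes "self_similar K \<rho> \<mu>"
  defines "T \<equiv> \<lambda>u. (derived ^^ u) K - (derived ^^ (u + 1)) K"
  shows "(\<forall>n::nat. n \<ge> 1 \<longrightarrow> (\<forall>\<alpha>::ordww.
            is_at ((derived ^^ n) K) \<alpha> (ord_at K (omega_pow n * (1 + \<alpha>)))))
       \<and> (\<forall>\<alpha>::ordww. \<alpha> < OmegaOmega \<longrightarrow>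
            is_at (T 0) \<alpha> (ord_at K (if \<alpha> < omega then \<alpha> else \<alpha> + 1)))
       \<and> (\<forall>u::nat. u \<ge> 1 \<longrightarrow> (\<forall>\<alpha>::ordww. \<alpha> < OmegaOmega \<longrightarrow>
            is_at (T u) \<alpha> (ord_at K (omega_pow u * (\<alpha> + 1)))))"
proof -
  obtain f where "bij_betw f {\<beta>. \<beta> \<le> OmegaOmega} K" and "\<forall>\<beta> \<gamma>. \<beta> < \<gamma> \<longrightarrow> f \<gamma> < f \<beta>"
    using assms(1) by (auto simp: self_similar_def rev_otype_ww1_def)
  then interpret ordww_enumeration K f
    using assms(1) ordww_le_OmegaOmega by unfold_locales (auto simp: self_similar_def)
  show ?thesis
    using is_at_derived is_at_isolated is_at_derived_diff
    by (simp add: T_def ord_at_eq flip: Suc_eq_plus1)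
qed

end
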